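(* Let $R$ be a finite commutative local Frobenius ring with residue field $\mathbb{F}_q$, and let $\ell$ be a nonnegative integer. For $i=1,2$, let $C_i$ be a linear code of length $n$ over $R$ with generator matrix $\mathrm{G}_i$ and parity check matrix $\mathrm{H}_i$. Then $\{C_1,C_2\}$ is an $\ell$-DLIP if and only if $\texttt{Rank}_q(\mathrm{H}_2\mathrm{G}_1^\top)=\texttt{Rank}_q(\mathrm{G}_1)-\ell$ or $\texttt{Rank}_q(\mathrm{H}_1\mathrm{G}_2^\top)=\texttt{Rank}_q(\mathrm{G}_2)-\ell$.
   Context: A linear code of length $n$ over $R$ is an $R$-submodule of $R^n$; $\dim(C):=\log_q|C|$. A pair $\{C,D\}$ of linear codes is an $\ell$-DLIP ($\ell$-dimension linear intersection pair) if $\dim(C\cap D)=\ell$. A generator matrix of $C$ is a matrix whose rows generate $C$; a parity check matrix of $C$ is a generator matrix of $C^\perp$ with respect to the standard inner product $\sum_j u_jc_j$. For a matrix $\mathrm{A}$ over $R$, $\texttt{Rank}_q(\mathrm{A}):=\log_q|M|$ where $M$ is the $R$-submodule spanned by the rows of $\mathrm{A}$. *)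

theory Defs
  imports "Jordan_Normal_Form.Matrix"
begin

definition is_ideal :: "'a::comm_ring_1 set \<Rightarrow> bool" where
  "is_ideal I \<longleftrightarrow> 0 \<in> I \<and> (\<forall>x\<in>I. \<forall>y\<in>I. x + y \<in> I) \<and> (\<forall>r. \<forall>x\<in>I. r * x \<in> I)"

definition is_maximal_ideal :: "'a::comm_ring_1 set \<Rightarrow> bool" where
  "is_maximal_ideal M \<longleftrightarrow> is_ideal M \<and> M \<noteq> UNIV \<and>
     (\<forall>J. is_ideal J \<and> M \<subseteq> J \<and> J \<noteq> UNIV \<longrightarrow> J = M)"

definition local_ring :: "'a::comm_ring_1 itself \<Rightarrow> bool" where
  "local_ring _ \<longleftrightarrow> (\<exists>!M::'a set. is_maximal_ideal M)"

definition max_ideal :: "'a::comm_ring_1 itself \<Rightarrow> 'a set" where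
  "max_ideal _ = (THE M::'a set. is_maximal_ideal M)"

definition annihilator :: "'a::comm_ring_1 set \<Rightarrow> 'a set" where
  "annihilator S = {x. \<forall>y\<in>S. x * y = 0}"

text \<open>A finite local ring R with maximal ideal m is Frobenius iff its socle
  soc(R) = ann(m) is isomorphic to R/m as an R-module, i.e. soc(R) is a cyclic
  module R s whose generator s has annihilator exactly m.\<close>
definition local_frobenius :: "'a::comm_ring_1 itself \<Rightarrow> bool" where
  "local_frobenius T \<longleftrightarrow> local_ring T \<and>
     (\<exists>s::'a. annihilator (max_ideal T) = range (\<lambda>r. r * s) \<and>
              {r. r * s = 0} = max_ideal T)"

definition residue_q :: "'a::comm_ring_1 itself \<Rightarrow> nat" where
  "residue_q T = card ((UNIV::'a set) // {(x, y). x - y \<in> max_ideal T})"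

definition linear_code :: "nat \<Rightarrow> 'a::comm_ring_1 vec set \<Rightarrow> bool" where
  "linear_code n C \<longleftrightarrow> C \<subseteq> carrier_vec n \<and> 0\<^sub>v n \<in> C \<and>
     (\<forall>x\<in>C. \<forall>y\<in>C. x + y \<in> C) \<and> (\<forall>r. \<forall>x\<in>C. r \<cdot>\<^sub>v x \<in> C)"

definition dual_code :: "nat \<Rightarrow> 'a::comm_ring_1 vec set \<Rightarrow> 'a vec set" where
  "dual_code n C = {u \<in> carrier_vec n. \<forall>c\<in>C. u \<bullet> c = 0}"

definition row_span :: "'a::comm_ring_1 mat \<Rightarrow> 'a vec set" where
  "row_span A = {transpose_mat A *\<^sub>v c | c. c \<in> carrier_vec (dim_row A)}"

definition generator_matrix :: "nat \<Rightarrow> 'a::comm_ring_1 vec set \<Rightarrow> 'a mat \<Rightarrow> bool" where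
  "generator_matrix n C G \<longleftrightarrow> dim_col G = n \<and> row_span G = C"

definition parity_check_matrix :: "nat \<Rightarrow> 'a::comm_ring_1 vec set \<Rightarrow> 'a mat \<Rightarrow> bool" where
  "parity_check_matrix n C H \<longleftrightarrow> generator_matrix n (dual_code n C) H"

definition code_dim :: "nat \<Rightarrow> 'a::comm_ring_1 vec set \<Rightarrow> real" where
  "code_dim q C = log (real q) (real (card C))"

definition rank_q :: "nat \<Rightarrow> 'a::comm_ring_1 mat \<Rightarrow> real" where
  "rank_q q A = log (real q) (real (card (row_span A)))"

definition DLIP :: "nat \<Rightarrow> nat \<Rightarrow> 'a::comm_ring_1 vec set \<Rightarrow> 'a vec set \<Rightarrow> bool" where
  "DLIP q l C D \<longleftrightarrow> code_dim q (C \<inter> D) = real l"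

end

theory Submission
  imports Defs
begin

text \<open>Over a finite local Frobenius ring R with maximal ideal m, every linear code D of length n
  satisfies |D| |D^perp| = |R^n|. Indeed |D| |D^perp| can only grow with D: enlarging D by a
  vector x with m x \<subseteq> D multiplies |D| by |R/m| = |soc R|, while y \<mapsto> y \<bullet> x maps D^perp
  into soc R with kernel (D + R x)^perp. Comparing {0} \<subseteq> D \<subseteq> R^n gives equality.

  The rows of H2 G1^T span the image of C2^perp under h \<mapsto> G1 h, whose kernel is
  C1^perp \<inter> C2^perp = (C1 + C2)^perp. Together with |C1 + C2| |C1 \<inter> C2| = |C1| |C2| this gives
  |row_span (H2 G1^T)| |C1 \<inter> C2| = |C1|, and symmetrically for H1 G2^T; after taking log_q
  each disjunct says exactly dim (C1 \<inter> C2) = l.\<close>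

section \<open>Counting by fibres\<close>

lemma card_eq_mult_card_image_if_uniform_fibres:
  assumes "finite A" and "\<And>a. a \<in> A \<Longrightarrow> card {x\<in>A. f x = f a} = k"
  shows "card A = k * card (f ` A)"
proof -
  have "A = (\<Union>y\<in>f ` A. {x\<in>A. f x = y})" by auto
  also have "card \<dots> = (\<Sum>y\<in>f ` A. card {x\<in>A. f x = y})"
    by (rule card_UN_disjoint) (use assms(1) in auto)
  also have "\<dots> = (\<Sum>y\<in>f ` A. k)"
    by (rule sum.cong) (use assms(2) in auto)
  finally show ?thesis by simp
qed

lemma card_UNIV_eq_card_kernel_mult_card_range:
  fixes f :: "'a::{ab_group_add,finite} \<Rightarrow> 'b"
  assumes fibres: "\<And>a b. f a = f b \<longleftrightarrow> a - b \<in> K"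
  shows "card (UNIV::'a set) = card K * card (range f)"
proof (rule card_eq_mult_card_image_if_uniform_fibres)
  fix a :: 'a
  have "{x \<in> UNIV. f x = f a} = (plus a) ` K"
  proof (intro equalityI subsetI)
    fix x assume "x \<in> {x \<in> UNIV. f x = f a}"
    then have "x - a \<in> K" using fibres by simp
    then show "x \<in> (plus a) ` K" by (rule rev_image_eqI) simp
  qed (use fibres in auto)
  then show "card {x \<in> UNIV. f x = f a} = card K" by (simp add: card_image)
qed simp

section \<open>Finite local rings\<close>

lemma is_maximal_ideal_max_ideal:
  assumes "local_ring TYPE('a::comm_ring_1)"
  shows "is_maximal_ideal (max_ideal TYPE('a))"
  using assms theI'[of is_maximal_ideal] unfolding local_ring_def max_ideal_def by auto

lemma is_ideal_max_ideal: "local_ring TYPE('a::comm_ring_1) \<Longrightarrow> is_ideal (max_ideal TYPE('a))"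
  using is_maximal_ideal_max_ideal unfolding is_maximal_ideal_def by blast

lemma max_ideal_unique:
  assumes "local_ring TYPE('a::comm_ring_1)" and "is_maximal_ideal (M::'a set)"
  shows "M = max_ideal TYPE('a)"
  using assms the1_equality[of is_maximal_ideal M] unfolding local_ring_def max_ideal_def by auto

lemma one_notin_max_ideal:
  assumes "local_ring TYPE('a::comm_ring_1)"
  shows "(1::'a) \<notin> max_ideal TYPE('a)"
proof
  assume "(1::'a) \<in> max_ideal TYPE('a)"
  then have "r * 1 \<in> max_ideal TYPE('a)" for r :: 'a
    using is_ideal_max_ideal[OF assms] unfolding is_ideal_def by blast
  then show False
    using is_maximal_ideal_max_ideal[OF assms] unfolding is_maximal_ideal_def by auto
qed

lemma exists_maximal_ideal_superset:
  assumes "is_ideal (I::'a::{comm_ring_1,finite} set)" and "I \<noteq> UNIV"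
  shows "\<exists>M. is_maximal_ideal M \<and> I \<subseteq> M"
proof -
  define S where "S = {J::'a set. is_ideal J \<and> I \<subseteq> J \<and> J \<noteq> UNIV}"
  have "I \<in> S" using assms unfolding S_def by blast
  then obtain M where M: "M \<in> S" and "\<And>J. J \<in> S \<Longrightarrow> M \<subseteq> J \<Longrightarrow> M = J"
    using finite_has_maximal[of S] by auto
  then have "is_maximal_ideal M" unfolding is_maximal_ideal_def S_def by blast
  then show ?thesis using M unfolding S_def by blast
qed

lemma unit_if_notin_max_ideal:
  assumes "local_ring TYPE('a::{comm_ring_1,finite})" and "u \<notin> max_ideal TYPE('a)"
  shows "\<exists>v. u * v = 1"
proof (rule ccontr)
  assume no_inverse: "\<nexists>v. u * v = 1"
  let ?I = "range (\<lambda>r. r * u)"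
  have "is_ideal ?I"
    unfolding is_ideal_def
  proof (intro conjI ballI allI)
    show "0 \<in> ?I" by (rule range_eqI[of _ _ 0]) simp
    show "x + y \<in> ?I" if "x \<in> ?I" "y \<in> ?I" for x y
      using that by (auto simp flip: distrib_right)
    show "r * x \<in> ?I" if "x \<in> ?I" for r x
      using that by (auto simp flip: mult.assoc)
  qed
  moreover have "?I \<noteq> UNIV"
    using no_inverse by (metis UNIV_I imageE mult.commute)
  ultimately obtain M where "is_maximal_ideal M" and "?I \<subseteq> M"
    using exists_maximal_ideal_superset by blast
  moreover have "u \<in> ?I" by (rule range_eqI[of _ _ 1]) simp
  ultimately have "u \<in> max_ideal TYPE('a)"
    using max_ideal_unique[OF assms(1)] by blast
  then show False using assms(2) by contradiction
qed

lemma unit_one_minus_max_ideal: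
  assumes "local_ring TYPE('a::{comm_ring_1,finite})" and "r \<in> max_ideal TYPE('a)"
  shows "\<exists>v. (1 - r) * v = 1"
proof (rule unit_if_notin_max_ideal[OF assms(1)])
  show "1 - r \<notin> max_ideal TYPE('a)"
  proof
    assume "1 - r \<in> max_ideal TYPE('a)"
    then have "(1 - r) + r \<in> max_ideal TYPE('a)"
      using assms is_ideal_max_ideal unfolding is_ideal_def by blast
    then show False using one_notin_max_ideal[OF assms(1)] by simp
  qed
qed

lemma card_UNIV_eq_card_max_ideal_mult_card_socle:
  assumes "local_frobenius TYPE('a::{comm_ring_1,finite})"
  shows "card (UNIV::'a set) = card (max_ideal TYPE('a)) * card (annihilator (max_ideal TYPE('a)))"
proof -
  obtain s where socle: "annihilator (max_ideal TYPE('a)) = range (\<lambda>r. r * s)"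
    and ann: "{r. r * s = 0} = max_ideal TYPE('a)"
    using assms unfolding local_frobenius_def by blast
  have "card (UNIV::'a set) = card (max_ideal TYPE('a)) * card (range (\<lambda>r. r * s))"
  proof (rule card_UNIV_eq_card_kernel_mult_card_range)
    fix a b :: 'a
    have "a * s = b * s \<longleftrightarrow> (a - b) * s = 0" by (simp add: left_diff_distrib)
    also have "\<dots> \<longleftrightarrow> a - b \<in> max_ideal TYPE('a)" using ann by blast
    finally show "a * s = b * s \<longleftrightarrow> a - b \<in> max_ideal TYPE('a)" .
  qed
  then show ?thesis using socle by simp
qed

section \<open>Linear codes, sums and cosets\<close>

lemma finite_carrier_vec: "finite (carrier_vec n :: 'a::finite vec set)"
proof -
  have "carrier_vec n \<subseteq> (\<lambda>f. vec n f) ` ({0..<n} \<rightarrow>\<^sub>E (UNIV::'a set))"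
  proof
    fix v :: "'a vec" assume v: "v \<in> carrier_vec n"
    have "v = vec n (restrict (($) v) {0..<n})" by (rule eq_vecI) (use v in auto)
    moreover have "restrict (($) v) {0..<n} \<in> {0..<n} \<rightarrow>\<^sub>E (UNIV::'a set)" by simp
    ultimately show "v \<in> (\<lambda>f. vec n f) ` ({0..<n} \<rightarrow>\<^sub>E UNIV)" by (rule image_eqI)
  qed
  then show ?thesis by (rule finite_subset) (simp add: finite_PiE)
qed

lemma add_diff_cancel_left_vec:
  "u \<in> carrier_vec n \<Longrightarrow> v \<in> carrier_vec n \<Longrightarrow> u + v - u = (v :: 'a::ab_group_add vec)"
  by (rule eq_vecI) auto

lemma add_diff_cancel_vec:
  "u \<in> carrier_vec n \<Longrightarrow> v \<in> carrier_vec n \<Longrightarrow> u + (v - u) = (v :: 'a::ab_group_add vec)"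
  by (rule eq_vecI) auto

lemma diff_eq_0_vec_iff:
  "u \<in> carrier_vec n \<Longrightarrow> v \<in> carrier_vec n \<Longrightarrow> u - v = 0\<^sub>v n \<longleftrightarrow> u = (v :: 'a::ab_group_add vec)"
  by (metis add_diff_cancel_vec minus_cancel_vec right_zero_vec)

lemma linear_code_carrier: "linear_code n C \<Longrightarrow> x \<in> C \<Longrightarrow> x \<in> carrier_vec n"
  and linear_code_zero: "linear_code n C \<Longrightarrow> 0\<^sub>v n \<in> C"
  and linear_code_add: "linear_code n C \<Longrightarrow> x \<in> C \<Longrightarrow> y \<in> C \<Longrightarrow> x + y \<in> C"
  and linear_code_smult: "linear_code n C \<Longrightarrow> x \<in> C \<Longrightarrow> r \<cdot>\<^sub>v x \<in> C"
  by (auto simp: linear_code_def)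

lemma linear_code_diff:
  assumes "linear_code n C" "x \<in> C" "y \<in> C"
  shows "x - y \<in> C"
proof -
  have "x - y = x + (-1) \<cdot>\<^sub>v y"
    by (rule eq_vecI) (use assms linear_code_carrier in auto)
  then show ?thesis using assms linear_code_add linear_code_smult by metis
qed

lemma linear_code_finite: "linear_code n (C :: 'a::{comm_ring_1,finite} vec set) \<Longrightarrow> finite C"
  using finite_carrier_vec finite_subset unfolding linear_code_def by blast

lemma card_linear_code_pos: "linear_code n (C :: 'a::{comm_ring_1,finite} vec set) \<Longrightarrow> card C > 0"
  using linear_code_zero linear_code_finite by (auto simp: card_gt_0_iff)

lemma linear_code_carrier_vec: "linear_code n (carrier_vec n :: 'a::comm_ring_1 vec set)"
  unfolding linear_code_def by auto

lemma linear_code_zero_code: "linear_code n {0\<^sub>v n :: 'a::comm_ring_1 vec}"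
  unfolding linear_code_def by auto

lemma dual_code_carrier: "dual_code n C \<subseteq> carrier_vec n"
  by (auto simp: dual_code_def)

lemma dual_code_antimono: "C \<subseteq> D \<Longrightarrow> dual_code n D \<subseteq> dual_code n C"
  by (auto simp: dual_code_def)

lemma dual_code_zero_code: "dual_code n {0\<^sub>v n} = (carrier_vec n :: 'a::comm_ring_1 vec set)"
  by (auto simp: dual_code_def)

lemma dual_code_carrier_vec: "dual_code n (carrier_vec n) = {0\<^sub>v n :: 'a::comm_ring_1 vec}"
proof (intro equalityI subsetI)
  fix u :: "'a vec" assume u: "u \<in> dual_code n (carrier_vec n)"
  have "u $ i = 0" if "i < n" for i
    using u scalar_prod_right_unit[OF that, of u] unfolding dual_code_def by simp
  moreover have "u \<in> carrier_vec n" using u dual_code_carrier by blast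
  ultimately show "u \<in> {0\<^sub>v n}" by (auto intro!: eq_vecI)
qed (auto simp: dual_code_def)

lemma linear_code_dual_code:
  assumes "C \<subseteq> carrier_vec n"
  shows "linear_code n (dual_code n C)"
  unfolding linear_code_def dual_code_def
  using assms by (auto simp: add_scalar_prod_distrib[of _ n])

definition code_sum :: "'a::comm_ring_1 vec set \<Rightarrow> 'a vec set \<Rightarrow> 'a vec set" where
  "code_sum A B = {a + b | a b. a \<in> A \<and> b \<in> B}"

lemma linear_code_code_sum:
  assumes A: "linear_code n A" and B: "linear_code n B"
  shows "linear_code n (code_sum A B)"
  unfolding linear_code_def
proof (intro conjI ballI allI)
  show "code_sum A B \<subseteq> carrier_vec n"
    using linear_code_carrier[OF A] linear_code_carrier[OF B] unfolding code_sum_def by auto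
  have "0\<^sub>v n = 0\<^sub>v n + (0\<^sub>v n :: 'a vec)" by simp
  then show "0\<^sub>v n \<in> code_sum A B"
    using linear_code_zero[OF A] linear_code_zero[OF B] unfolding code_sum_def by blast
next
  fix x y assume "x \<in> code_sum A B" "y \<in> code_sum A B"
  then obtain a b a' b' where x: "x = a + b" "a \<in> A" "b \<in> B"
    and y: "y = a' + b'" "a' \<in> A" "b' \<in> B"
    unfolding code_sum_def by blast
  have "a \<in> carrier_vec n" "b \<in> carrier_vec n" "a' \<in> carrier_vec n" "b' \<in> carrier_vec n"
    using x y linear_code_carrier[OF A] linear_code_carrier[OF B] by auto
  then have "x + y = (a + a') + (b + b')"
    unfolding x y by (intro eq_vecI) auto
  then show "x + y \<in> code_sum A B"
    using linear_code_add[OF A x(2) y(2)] linear_code_add[OF B x(3) y(3)]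
    unfolding code_sum_def by blast
next
  fix r x assume "x \<in> code_sum A B"
  then obtain a b where x: "x = a + b" "a \<in> A" "b \<in> B" unfolding code_sum_def by blast
  have "a \<in> carrier_vec n" "b \<in> carrier_vec n"
    using x linear_code_carrier[OF A] linear_code_carrier[OF B] by auto
  then have "r \<cdot>\<^sub>v x = r \<cdot>\<^sub>v a + r \<cdot>\<^sub>v b"
    unfolding x(1) by (rule smult_add_distrib_vec)
  then show "r \<cdot>\<^sub>v x \<in> code_sum A B"
    using linear_code_smult[OF A x(2)] linear_code_smult[OF B x(3)] unfolding code_sum_def by blast
qed

lemma code_sum_upper:
  assumes A: "linear_code n A" and B: "linear_code n B"
  shows "A \<subseteq> code_sum A B" and "B \<subseteq> code_sum A B"
proof -
  have "a = a + 0\<^sub>v n" if "a \<in> A" for a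
    using that linear_code_carrier[OF A] by simp
  then show "A \<subseteq> code_sum A B" using linear_code_zero[OF B] unfolding code_sum_def by blast
  have "b = 0\<^sub>v n + b" if "b \<in> B" for b
    using that linear_code_carrier[OF B] by simp
  then show "B \<subseteq> code_sum A B" using linear_code_zero[OF A] unfolding code_sum_def by blast
qed

lemma code_sum_least:
  assumes "linear_code n E" "A \<subseteq> E" "B \<subseteq> E"
  shows "code_sum A B \<subseteq> E"
  using assms linear_code_add unfolding code_sum_def by blast

lemma dual_code_code_sum:
  assumes A: "linear_code n A" and B: "linear_code n B"
  shows "dual_code n (code_sum A B) = dual_code n A \<inter> dual_code n B"
proof
  show "dual_code n (code_sum A B) \<subseteq> dual_code n A \<inter> dual_code n B"
    using dual_code_antimono[OF code_sum_upper(1)[OF A B]]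
      dual_code_antimono[OF code_sum_upper(2)[OF A B]] by blast
  show "dual_code n A \<inter> dual_code n B \<subseteq> dual_code n (code_sum A B)"
    using linear_code_carrier[OF A] linear_code_carrier[OF B]
    by (auto simp: dual_code_def code_sum_def scalar_prod_add_distrib[of _ n])
qed

definition vec_coset :: "'a::comm_ring_1 vec set \<Rightarrow> 'a vec \<Rightarrow> 'a vec set" where
  "vec_coset D v = (plus v) ` D"

lemma vec_coset_subset:
  assumes D: "linear_code n D" and u: "u \<in> carrier_vec n" and v: "v \<in> carrier_vec n"
    and "u - v \<in> D"
  shows "vec_coset D u \<subseteq> vec_coset D v"
proof
  fix w assume "w \<in> vec_coset D u"
  then obtain d where d: "d \<in> D" "w = u + d" unfolding vec_coset_def by blast
  have "d \<in> carrier_vec n" using d linear_code_carrier[OF D] by blast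
  then have "w = v + ((u - v) + d)"
    unfolding d(2) using u v by (intro eq_vecI) auto
  then show "w \<in> vec_coset D v"
    using linear_code_add[OF D \<open>u - v \<in> D\<close> d(1)] unfolding vec_coset_def by blast
qed

lemma vec_coset_eq_iff:
  assumes D: "linear_code n D" and u: "u \<in> carrier_vec n" and v: "v \<in> carrier_vec n"
  shows "vec_coset D u = vec_coset D v \<longleftrightarrow> u - v \<in> D"
proof
  assume "vec_coset D u = vec_coset D v"
  moreover have "u \<in> vec_coset D u"
    using u linear_code_zero[OF D] unfolding vec_coset_def by (auto intro: rev_image_eqI)
  ultimately obtain d where "d \<in> D" "u = v + d" unfolding vec_coset_def by auto
  then show "u - v \<in> D" using v linear_code_carrier[OF D] by (simp add: add_diff_cancel_left_vec)
next
  assume uv: "u - v \<in> D"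
  moreover have "v - u = (-1) \<cdot>\<^sub>v (u - v)" by (rule eq_vecI) (use u v in auto)
  ultimately have "v - u \<in> D" using linear_code_smult[OF D] by simp
  then show "vec_coset D u = vec_coset D v"
    using vec_coset_subset[OF D u v uv] vec_coset_subset[OF D v u] by blast
qed

lemma card_code_eq_card_kernel_mult_card_image:
  fixes A :: "'a::{comm_ring_1,finite} vec set"
  assumes A: "linear_code n A" and "K \<subseteq> A"
    and fibres: "\<And>a b. a \<in> A \<Longrightarrow> b \<in> A \<Longrightarrow> f a = f b \<longleftrightarrow> a - b \<in> K"
  shows "card A = card K * card (f ` A)"
proof (rule card_eq_mult_card_image_if_uniform_fibres[OF linear_code_finite[OF A]])
  fix a assume a: "a \<in> A"
  have carrier: "x \<in> carrier_vec n" if "x \<in> A" for x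
    using that linear_code_carrier[OF A] by blast
  have "{x \<in> A. f x = f a} = (plus a) ` K"
  proof (intro equalityI subsetI)
    fix x assume "x \<in> {x \<in> A. f x = f a}"
    then have "x \<in> A" "x - a \<in> K" using fibres a by auto
    moreover have "x = a + (x - a)" using a \<open>x \<in> A\<close> carrier add_diff_cancel_vec by metis
    ultimately show "x \<in> (plus a) ` K" by blast
  next
    fix x assume "x \<in> (plus a) ` K"
    then obtain k where k: "k \<in> K" "x = a + k" by blast
    then have "x \<in> A" using a \<open>K \<subseteq> A\<close> linear_code_add[OF A] by blast
    moreover have "x - a = k"
      using k a \<open>K \<subseteq> A\<close> carrier add_diff_cancel_left_vec by (metis subsetD)
    ultimately show "x \<in> {x \<in> A. f x = f a}" using fibres[of x a] a k(1) by simp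
  qed
  moreover have "inj_on (plus a) K"
  proof (rule inj_onI)
    fix k k' assume "k \<in> K" "k' \<in> K" "a + k = a + k'"
    then show "k = k'" using a \<open>K \<subseteq> A\<close> carrier add_diff_cancel_left_vec by (metis subsetD)
  qed
  ultimately show "card {x \<in> A. f x = f a} = card K" by (simp add: card_image)
qed

lemma card_code_sum_mult_card_inter:
  fixes A B :: "'a::{comm_ring_1,finite} vec set"
  assumes A: "linear_code n A" and B: "linear_code n B"
  shows "card (code_sum A B) * card (A \<inter> B) = card A * card B"
proof -
  let ?S = "code_sum A B"
  have S: "linear_code n ?S" by (rule linear_code_code_sum[OF A B])
  have AS: "A \<subseteq> ?S" and BS: "B \<subseteq> ?S" by (rule code_sum_upper[OF A B])+
  have coset_eq: "vec_coset B x = vec_coset B y \<longleftrightarrow> x - y \<in> B" if "x \<in> ?S" "y \<in> ?S" for x y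
    using that linear_code_carrier[OF S] vec_coset_eq_iff[OF B] by blast
  have S_card: "card ?S = card B * card (vec_coset B ` ?S)"
    by (rule card_code_eq_card_kernel_mult_card_image[OF S BS coset_eq])
  have A_card: "card A = card (A \<inter> B) * card (vec_coset B ` A)"
  proof (rule card_code_eq_card_kernel_mult_card_image[OF A])
    show "vec_coset B x = vec_coset B y \<longleftrightarrow> x - y \<in> A \<inter> B" if "x \<in> A" "y \<in> A" for x y
      using that AS coset_eq linear_code_diff[OF A] by blast
  qed blast
  have cosets: "vec_coset B ` ?S = vec_coset B ` A"
  proof -
    have "vec_coset B (a + b) = vec_coset B a" if "a \<in> A" "b \<in> B" for a b
    proof -
      have "a + b \<in> ?S" using that unfolding code_sum_def by blast
      moreover have "a + b - a = b"
        using that linear_code_carrier[OF A] linear_code_carrier[OF B] add_diff_cancel_left_vec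
        by metis
      ultimately show ?thesis using that AS coset_eq[of "a + b" a] by auto
    qed
    then have "vec_coset B ` ?S \<subseteq> vec_coset B ` A" unfolding code_sum_def by auto
    then show ?thesis using AS by blast
  qed
  have "card ?S * card (A \<inter> B) = card B * (card (A \<inter> B) * card (vec_coset B ` A))"
    unfolding S_card cosets by (metis mult.assoc mult.commute)
  also have "\<dots> = card B * card A" using A_card by simp
  finally show ?thesis by (rule trans[OF _ mult.commute])
qed

section \<open>The size of the dual code\<close>

definition multiples :: "'a::comm_ring_1 vec \<Rightarrow> 'a vec set" where
  "multiples x = range (\<lambda>r. r \<cdot>\<^sub>v x)"

lemma linear_code_multiples:
  assumes "x \<in> carrier_vec n"
  shows "linear_code n (multiples x)"
  unfolding linear_code_def multiples_def
proof (intro conjI ballI allI)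
  show "range (\<lambda>r. r \<cdot>\<^sub>v x) \<subseteq> carrier_vec n" using assms by auto
  have "0\<^sub>v n = 0 \<cdot>\<^sub>v x" using assms by (intro eq_vecI) auto
  then show "0\<^sub>v n \<in> range (\<lambda>r. r \<cdot>\<^sub>v x)" by blast
  show "u + v \<in> range (\<lambda>r. r \<cdot>\<^sub>v x)"
    if "u \<in> range (\<lambda>r. r \<cdot>\<^sub>v x)" "v \<in> range (\<lambda>r. r \<cdot>\<^sub>v x)" for u v
    using that by (auto simp flip: add_smult_distrib_vec)
  show "r \<cdot>\<^sub>v u \<in> range (\<lambda>r. r \<cdot>\<^sub>v x)" if "u \<in> range (\<lambda>r. r \<cdot>\<^sub>v x)" for r u
    using that by (auto simp: smult_smult_assoc)
qed

lemma multiples_subset: "linear_code n E \<Longrightarrow> x \<in> E \<Longrightarrow> multiples x \<subseteq> E"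
  unfolding multiples_def using linear_code_smult by blast

lemma dual_code_multiples:
  assumes "x \<in> carrier_vec n"
  shows "dual_code n (multiples x) = {u \<in> carrier_vec n. u \<bullet> x = 0}"
proof (intro equalityI subsetI)
  fix u assume "u \<in> dual_code n (multiples x)"
  then have "u \<in> carrier_vec n" "\<forall>r. u \<bullet> (r \<cdot>\<^sub>v x) = 0"
    unfolding dual_code_def multiples_def by auto
  then show "u \<in> {u \<in> carrier_vec n. u \<bullet> x = 0}" by (metis (mono_tags) mem_Collect_eq one_smult_vec)
next
  fix u assume u: "u \<in> {u \<in> carrier_vec n. u \<bullet> x = 0}"
  then have "u \<bullet> (r \<cdot>\<^sub>v x) = 0" for r using assms by simp
  then show "u \<in> dual_code n (multiples x)" using u unfolding dual_code_def multiples_def by auto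
qed

lemma exists_vector_max_ideal_multiples_in_subcode:
  fixes D E :: "'a::{comm_ring_1,finite} vec set"
  assumes loc: "local_ring TYPE('a)" and D: "linear_code n D" and E: "linear_code n E"
    and "D \<subset> E"
  shows "\<exists>x\<in>E - D. \<forall>r\<in>max_ideal TYPE('a). r \<cdot>\<^sub>v x \<in> D"
proof -
  let ?ext = "\<lambda>x. code_sum D (multiples x)"
  obtain x0 where "x0 \<in> E - D" using \<open>D \<subset> E\<close> by blast
  then obtain x where x: "x \<in> E - D" and least: "\<And>y. y \<in> E - D \<Longrightarrow> card (?ext x) \<le> card (?ext y)"
    using ex_has_least_nat[of "\<lambda>x. x \<in> E - D" x0 "\<lambda>x. card (?ext x)"] by blast
  have xc: "x \<in> carrier_vec n" using x linear_code_carrier[OF E] by blast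
  have ext_x: "linear_code n (?ext x)" by (rule linear_code_code_sum[OF D linear_code_multiples[OF xc]])
  have x_ext: "x \<in> ?ext x"
  proof -
    have "x \<in> multiples x" unfolding multiples_def by (rule range_eqI[of _ _ 1]) simp
    then show ?thesis using code_sum_upper(2)[OF D linear_code_multiples[OF xc]] by blast
  qed
  \<comment> \<open>Otherwise minimality gives D + R r x = D + R x, so (1 - t r) x \<in> D for some t,
    and 1 - t r is a unit.\<close>
  have "r \<cdot>\<^sub>v x \<in> D" if r: "r \<in> max_ideal TYPE('a)" for r
  proof (rule ccontr)
    assume "r \<cdot>\<^sub>v x \<notin> D"
    then have rx: "r \<cdot>\<^sub>v x \<in> E - D" using x linear_code_smult[OF E] by blast
    have "multiples (r \<cdot>\<^sub>v x) \<subseteq> multiples x"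
      unfolding multiples_def by (auto simp: smult_smult_assoc)
    then have "?ext (r \<cdot>\<^sub>v x) \<subseteq> ?ext x"
      using code_sum_least[OF ext_x] code_sum_upper[OF D linear_code_multiples[OF xc]] by blast
    then have "?ext (r \<cdot>\<^sub>v x) = ?ext x"
      using card_subset_eq[OF linear_code_finite[OF ext_x]] least[OF rx] le_antisym card_mono
        linear_code_finite[OF ext_x] by metis
    then obtain d t where d: "d \<in> D" and x_eq: "x = d + t \<cdot>\<^sub>v (r \<cdot>\<^sub>v x)"
      using x_ext unfolding code_sum_def multiples_def by blast
    have dc: "d \<in> carrier_vec n" using d linear_code_carrier[OF D] by blast
    have "t * r \<in> max_ideal TYPE('a)" using r is_ideal_max_ideal[OF loc] unfolding is_ideal_def by blast
    then obtain v where v: "(1 - t * r) * v = 1" using unit_one_minus_max_ideal[OF loc] by blast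
    have "x = v \<cdot>\<^sub>v d"
    proof (rule eq_vecI)
      fix i assume "i < dim_vec (v \<cdot>\<^sub>v d)"
      then have i: "i < n" using dc by simp
      have "x $ i = (d + t \<cdot>\<^sub>v (r \<cdot>\<^sub>v x)) $ i" by (rule arg_cong[where f = "\<lambda>w. w $ i", OF x_eq])
      also have "\<dots> = d $ i + t * (r * x $ i)" using i dc xc by simp
      finally have d_i: "d $ i = (1 - t * r) * x $ i" by (simp add: algebra_simps)
      have "(v \<cdot>\<^sub>v d) $ i = v * d $ i" using i dc by simp
      also have "\<dots> = ((1 - t * r) * v) * x $ i" unfolding d_i by (simp only: ac_simps)
      also have "\<dots> = x $ i" using v by simp
      finally show "x $ i = (v \<cdot>\<^sub>v d) $ i" ..
    qed (use dc xc in simp)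
    then have "x \<in> D" using linear_code_smult[OF D d] by simp
    then show False using x by blast
  qed
  then show ?thesis using x by blast
qed

lemma smult_mem_iff_max_ideal:
  fixes D :: "'a::comm_ring_1 vec set"
  assumes loc: "local_ring TYPE('a)" and D: "linear_code n D" and x: "x \<in> carrier_vec n" "x \<notin> D"
    and annihilated: "\<forall>r\<in>max_ideal TYPE('a). r \<cdot>\<^sub>v x \<in> D"
  shows "r \<cdot>\<^sub>v x \<in> D \<longleftrightarrow> r \<in> max_ideal TYPE('a)"
proof -
  have "0 \<cdot>\<^sub>v x = 0\<^sub>v n" using x(1) by (intro eq_vecI) auto
  then have "is_ideal {r. r \<cdot>\<^sub>v x \<in> D}"
    unfolding is_ideal_def
    using linear_code_zero[OF D] linear_code_add[OF D] linear_code_smult[OF D] x(1)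
    by (auto simp: add_smult_distrib_vec smult_smult_assoc[symmetric])
  moreover have "1 \<notin> {r. r \<cdot>\<^sub>v x \<in> D}" using x(2) by simp
  then have "{r. r \<cdot>\<^sub>v x \<in> D} \<noteq> UNIV" by blast
  moreover have "max_ideal TYPE('a) \<subseteq> {r. r \<cdot>\<^sub>v x \<in> D}" using annihilated by blast
  ultimately have "{r. r \<cdot>\<^sub>v x \<in> D} = max_ideal TYPE('a)"
    using is_maximal_ideal_max_ideal[OF loc] unfolding is_maximal_ideal_def by blast
  then show ?thesis by blast
qed

lemma vec_coset_image_code_sum_multiples:
  assumes D: "linear_code n D" and x: "x \<in> carrier_vec n"
  shows "vec_coset D ` code_sum D (multiples x) = range (\<lambda>r. vec_coset D (r \<cdot>\<^sub>v x))"
proof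
  let ?S = "code_sum D (multiples x)"
  have S: "linear_code n ?S" by (rule linear_code_code_sum[OF D linear_code_multiples[OF x]])
  have rx_S: "r \<cdot>\<^sub>v x \<in> ?S" for r
    using code_sum_upper(2)[OF D linear_code_multiples[OF x]] unfolding multiples_def by blast
  have coset_eq: "vec_coset D (d + r \<cdot>\<^sub>v x) = vec_coset D (r \<cdot>\<^sub>v x)" if "d \<in> D" for d r
  proof -
    have "d \<in> carrier_vec n" using that linear_code_carrier[OF D] by blast
    then have "d + r \<cdot>\<^sub>v x - r \<cdot>\<^sub>v x = d" using x by (intro eq_vecI) auto
    then show ?thesis using that vec_coset_eq_iff[OF D] rx_S linear_code_carrier[OF S]
      by (metis linear_code_add[OF S] code_sum_upper(1)[OF D linear_code_multiples[OF x]] subsetD)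
  qed
  show "vec_coset D ` ?S \<subseteq> range (\<lambda>r. vec_coset D (r \<cdot>\<^sub>v x))"
  proof
    fix c assume "c \<in> vec_coset D ` ?S"
    then obtain d r where "d \<in> D" "c = vec_coset D (d + r \<cdot>\<^sub>v x)"
      unfolding code_sum_def multiples_def by blast
    then show "c \<in> range (\<lambda>r. vec_coset D (r \<cdot>\<^sub>v x))" using coset_eq by simp
  qed
  show "range (\<lambda>r. vec_coset D (r \<cdot>\<^sub>v x)) \<subseteq> vec_coset D ` ?S" using rx_S by blast
qed

lemma card_code_sum_multiples:
  fixes D :: "'a::{comm_ring_1,finite} vec set"
  assumes loc: "local_ring TYPE('a)"
    and socle: "card (UNIV::'a set) = card (max_ideal TYPE('a)) * card (annihilator (max_ideal TYPE('a)))"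
    and D: "linear_code n D" and x: "x \<in> carrier_vec n" "x \<notin> D"
    and annihilated: "\<forall>r\<in>max_ideal TYPE('a). r \<cdot>\<^sub>v x \<in> D"
  shows "card (code_sum D (multiples x)) = card (annihilator (max_ideal TYPE('a))) * card D"
proof -
  let ?m = "max_ideal TYPE('a)" and ?S = "code_sum D (multiples x)"
  let ?cosets = "range (\<lambda>r. vec_coset D (r \<cdot>\<^sub>v x))"
  have X: "linear_code n (multiples x)" by (rule linear_code_multiples[OF x(1)])
  have S: "linear_code n ?S" by (rule linear_code_code_sum[OF D X])
  have "card ?S = card D * card (vec_coset D ` ?S)"
  proof (rule card_code_eq_card_kernel_mult_card_image[OF S code_sum_upper(1)[OF D X]])
    show "vec_coset D a = vec_coset D b \<longleftrightarrow> a - b \<in> D" if "a \<in> ?S" "b \<in> ?S" for a b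
      using that linear_code_carrier[OF S] vec_coset_eq_iff[OF D] by blast
  qed
  then have S_card: "card ?S = card D * card ?cosets"
    by (simp only: vec_coset_image_code_sum_multiples[OF D x(1)])
  have R_card: "card (UNIV::'a set) = card ?m * card ?cosets"
  proof (rule card_UNIV_eq_card_kernel_mult_card_range)
    fix a b :: 'a
    have "a \<cdot>\<^sub>v x - b \<cdot>\<^sub>v x = (a - b) \<cdot>\<^sub>v x" using x(1) by (intro eq_vecI) (auto simp: algebra_simps)
    then show "vec_coset D (a \<cdot>\<^sub>v x) = vec_coset D (b \<cdot>\<^sub>v x) \<longleftrightarrow> a - b \<in> ?m"
      using vec_coset_eq_iff[OF D] x(1) smult_mem_iff_max_ideal[OF loc D x annihilated] by simp
  qed
  have "0 \<in> ?m" using is_ideal_max_ideal[OF loc] unfolding is_ideal_def by blast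
  then have "card ?cosets = card (annihilator ?m)" using R_card socle by auto
  then show ?thesis using S_card by (simp add: mult.commute)
qed

lemma card_dual_code_le_code_sum_multiples:
  fixes D :: "'a::{comm_ring_1,finite} vec set"
  assumes D: "linear_code n D" and x: "x \<in> carrier_vec n"
    and annihilated: "\<forall>r\<in>max_ideal TYPE('a). r \<cdot>\<^sub>v x \<in> D"
  shows "card (dual_code n D)
    \<le> card (annihilator (max_ideal TYPE('a))) * card (dual_code n (code_sum D (multiples x)))"
proof -
  let ?m = "max_ideal TYPE('a)" and ?Dd = "dual_code n D"
  let ?K = "dual_code n (code_sum D (multiples x))"
  have Dd: "linear_code n ?Dd" by (rule linear_code_dual_code) (use D in \<open>simp add: linear_code_def\<close>)
  have K: "?K = {y \<in> ?Dd. y \<bullet> x = 0}"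
    using dual_code_code_sum[OF D linear_code_multiples[OF x]] dual_code_multiples[OF x]
      dual_code_carrier[of n D] by auto
  have "card ?Dd = card ?K * card ((\<lambda>y. y \<bullet> x) ` ?Dd)"
  proof (rule card_code_eq_card_kernel_mult_card_image[OF Dd])
    show "?K \<subseteq> ?Dd" using K by blast
    fix y z assume yz: "y \<in> ?Dd" "z \<in> ?Dd"
    then have "(y - z) \<bullet> x = y \<bullet> x - z \<bullet> x"
      using dual_code_carrier x by (blast intro: minus_scalar_prod_distrib)
    then show "y \<bullet> x = z \<bullet> x \<longleftrightarrow> y - z \<in> ?K" using K yz linear_code_diff[OF Dd] by auto
  qed
  moreover have "(\<lambda>y. y \<bullet> x) ` ?Dd \<subseteq> annihilator ?m"
  proof (rule image_subsetI)
    fix y assume y: "y \<in> ?Dd"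
    have "(y \<bullet> x) * w = 0" if "w \<in> ?m" for w
    proof -
      have "y \<in> carrier_vec n" using y dual_code_carrier by blast
      then have "(y \<bullet> x) * w = y \<bullet> (w \<cdot>\<^sub>v x)" using x by (simp add: mult.commute)
      also have "\<dots> = 0" using y annihilated that unfolding dual_code_def by blast
      finally show ?thesis .
    qed
    then show "y \<bullet> x \<in> annihilator ?m" unfolding annihilator_def by blast
  qed
  then have "card ((\<lambda>y. y \<bullet> x) ` ?Dd) \<le> card (annihilator ?m)" by (simp add: card_mono)
  ultimately show ?thesis by (simp add: mult.commute)
qed

text \<open>The hypothesis socle says |soc R| = |R/m|, which for a finite local ring R is exactly
  the Frobenius property.\<close>

lemma card_mult_card_dual_code_mono:
  fixes D E :: "'a::{comm_ring_1,finite} vec set"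
  assumes loc: "local_ring TYPE('a)"
    and socle: "card (UNIV::'a set) = card (max_ideal TYPE('a)) * card (annihilator (max_ideal TYPE('a)))"
    and E: "linear_code n E"
  shows "linear_code n D \<Longrightarrow> D \<subseteq> E \<Longrightarrow>
    card D * card (dual_code n D) \<le> card E * card (dual_code n E)"
proof (induction "card E - card D" arbitrary: D rule: less_induct)
  case less
  show ?case
  proof (cases "D = E")
    case False
    with less.prems obtain x where x: "x \<in> E - D"
      and annihilated: "\<forall>r\<in>max_ideal TYPE('a). r \<cdot>\<^sub>v x \<in> D"
      using exists_vector_max_ideal_multiples_in_subcode[OF loc _ E] by blast
    let ?D' = "code_sum D (multiples x)"
    have xc: "x \<in> carrier_vec n" using x linear_code_carrier[OF E] by blast
    have D': "linear_code n ?D'"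
      by (rule linear_code_code_sum[OF less.prems(1) linear_code_multiples[OF xc]])
    have D'E: "?D' \<subseteq> E"
      using code_sum_least[OF E less.prems(2) multiples_subset[OF E]] x by blast
    have "card D * card (dual_code n D)
        \<le> card D * (card (annihilator (max_ideal TYPE('a))) * card (dual_code n ?D'))"
      using card_dual_code_le_code_sum_multiples[OF less.prems(1) xc annihilated] by simp
    also have "\<dots> = card ?D' * card (dual_code n ?D')"
      using card_code_sum_multiples[OF loc socle less.prems(1) xc _ annihilated] x by simp
    also have "\<dots> \<le> card E * card (dual_code n E)"
    proof (rule less.hyps[OF _ D' D'E])
      have "x \<in> ?D'" "D \<subseteq> ?D'"
        using code_sum_upper[OF less.prems(1) linear_code_multiples[OF xc]]
        unfolding multiples_def by (auto intro: range_eqI[of _ _ 1])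
      then have "D \<subset> ?D'" using x by blast
      then have "card D < card ?D'" by (rule psubset_card_mono[OF linear_code_finite[OF D']])
      moreover have "card ?D' \<le> card E" using D'E linear_code_finite[OF E] by (rule card_mono[rotated])
      ultimately show "card E - card ?D' < card E - card D" by linarith
    qed
    finally show ?thesis .
  qed simp
qed

lemma card_mult_card_dual_code:
  fixes D :: "'a::{comm_ring_1,finite} vec set"
  assumes frob: "local_frobenius TYPE('a)" and D: "linear_code n D"
  shows "card D * card (dual_code n D) = card (carrier_vec n :: 'a vec set)"
proof -
  have loc: "local_ring TYPE('a)" using frob unfolding local_frobenius_def by blast
  note mono = card_mult_card_dual_code_mono[OF loc card_UNIV_eq_card_max_ideal_mult_card_socle[OF frob]]
  let ?V = "carrier_vec n :: 'a vec set" and ?O = "{0\<^sub>v n :: 'a vec}"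
  have "card D * card (dual_code n D) \<le> card ?V * card (dual_code n ?V)"
    using mono[OF linear_code_carrier_vec D] D by (simp add: linear_code_def)
  moreover have "card ?O * card (dual_code n ?O) \<le> card D * card (dual_code n D)"
    using mono[OF D linear_code_zero_code] linear_code_zero[OF D] by simp
  ultimately show ?thesis by (simp add: dual_code_carrier_vec dual_code_zero_code)
qed

section \<open>Generator and parity check matrices\<close>

lemma row_span_mult_transpose:
  fixes G H :: "'a::comm_ring_1 mat"
  assumes "dim_col H = dim_col G"
  shows "row_span (H * transpose_mat G) = (\<lambda>h. G *\<^sub>v h) ` row_span H"
proof -
  have G: "G \<in> carrier_mat (dim_row G) (dim_col G)" by (rule carrier_matI) simp_all
  have H: "H \<in> carrier_mat (dim_row H) (dim_col G)" by (rule carrier_matI) (simp_all add: assms)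
  have transpose: "transpose_mat (H * transpose_mat G) = G * transpose_mat H"
    using transpose_mult[OF H transpose_carrier_mat[THEN iffD2, OF G]] by simp
  have rows: "transpose_mat (H * transpose_mat G) *\<^sub>v c = G *\<^sub>v (transpose_mat H *\<^sub>v c)"
    if "c \<in> carrier_vec (dim_row H)" for c
    unfolding transpose using assoc_mult_mat_vec[OF G transpose_carrier_mat[THEN iffD2, OF H] that] .
  show ?thesis
  proof (intro equalityI subsetI)
    fix v assume "v \<in> row_span (H * transpose_mat G)"
    then obtain c where "c \<in> carrier_vec (dim_row H)" "v = G *\<^sub>v (transpose_mat H *\<^sub>v c)"
      unfolding row_span_def using rows by auto
    then show "v \<in> (\<lambda>h. G *\<^sub>v h) ` row_span H" unfolding row_span_def by blast
  next
    fix v assume "v \<in> (\<lambda>h. G *\<^sub>v h) ` row_span H"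
    then obtain c where "c \<in> carrier_vec (dim_row H)" "v = transpose_mat (H * transpose_mat G) *\<^sub>v c"
      unfolding row_span_def using rows by auto
    then show "v \<in> row_span (H * transpose_mat G)" unfolding row_span_def by auto
  qed
qed

lemma generator_matrix_mult_vec_eq_0_iff:
  fixes G :: "'a::comm_ring_1 mat"
  assumes gen: "generator_matrix n C G" and w: "w \<in> carrier_vec n"
  shows "G *\<^sub>v w = 0\<^sub>v (dim_row G) \<longleftrightarrow> w \<in> dual_code n C"
proof -
  let ?k = "dim_row G"
  have G: "G \<in> carrier_mat ?k n" and C: "C = {transpose_mat G *\<^sub>v c | c. c \<in> carrier_vec ?k}"
    using gen unfolding generator_matrix_def row_span_def by auto
  have scalar: "w \<bullet> (transpose_mat G *\<^sub>v c) = c \<bullet> (G *\<^sub>v w)" if "c \<in> carrier_vec ?k" for c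
  proof -
    have "transpose_mat G *\<^sub>v c \<in> carrier_vec n"
      by (rule mult_mat_vec_carrier[OF transpose_carrier_mat[THEN iffD2, OF G] that])
    then have "w \<bullet> (transpose_mat G *\<^sub>v c) = (transpose_mat G *\<^sub>v c) \<bullet> w" by (rule comm_scalar_prod[OF w])
    also have "\<dots> = c \<bullet> (G *\<^sub>v w)" by (rule transpose_vec_mult_scalar[OF G w that])
    finally show ?thesis .
  qed
  show ?thesis
  proof
    assume "G *\<^sub>v w = 0\<^sub>v ?k"
    then show "w \<in> dual_code n C" using w scalar unfolding dual_code_def C by auto
  next
    assume dual: "w \<in> dual_code n C"
    show "G *\<^sub>v w = 0\<^sub>v ?k"
    proof (rule eq_vecI)
      fix i assume "i < dim_vec (0\<^sub>v ?k :: 'a vec)"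
      then have i: "i < ?k" by simp
      have "(G *\<^sub>v w) $ i = unit_vec ?k i \<bullet> (G *\<^sub>v w)"
        by (rule scalar_prod_left_unit[OF mult_mat_vec_carrier[OF G w] i, symmetric])
      also have "\<dots> = w \<bullet> (transpose_mat G *\<^sub>v unit_vec ?k i)" by (rule scalar[symmetric]) simp
      also have "\<dots> = 0" using dual unit_vec_carrier unfolding dual_code_def C by blast
      finally show "(G *\<^sub>v w) $ i = 0\<^sub>v ?k $ i" using i by simp
    qed simp
  qed
qed

lemma card_row_span_mult_card_inter:
  fixes C1 C2 :: "'a::{comm_ring_1,finite} vec set"
  assumes frob: "local_frobenius TYPE('a)"
    and C1: "linear_code n C1" and C2: "linear_code n C2"
    and G1: "generator_matrix n C1 G1" and H2: "parity_check_matrix n C2 H2"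
  shows "card (row_span (H2 * transpose_mat G1)) * card (C1 \<inter> C2) = card C1"
proof -
  let ?D1 = "dual_code n C1" and ?D2 = "dual_code n C2" and ?S = "code_sum C1 C2"
  let ?P = "card (row_span (H2 * transpose_mat G1))"
  have G1c: "G1 \<in> carrier_mat (dim_row G1) n" using G1 unfolding generator_matrix_def by auto
  have D2: "linear_code n ?D2" by (rule linear_code_dual_code) (use C2 in \<open>simp add: linear_code_def\<close>)
  have S: "linear_code n ?S" by (rule linear_code_code_sum[OF C1 C2])
  have image: "row_span (H2 * transpose_mat G1) = (\<lambda>h. G1 *\<^sub>v h) ` ?D2"
    using H2 G1 unfolding parity_check_matrix_def generator_matrix_def
    by (auto simp: row_span_mult_transpose)
  have kernel: "dual_code n ?S = ?D1 \<inter> ?D2" by (rule dual_code_code_sum[OF C1 C2])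
  have D2_card: "card ?D2 = card (dual_code n ?S) * ?P"
    unfolding image
  proof (rule card_code_eq_card_kernel_mult_card_image[OF D2])
    show "dual_code n ?S \<subseteq> ?D2" using kernel by blast
    fix h h' assume hh: "h \<in> ?D2" "h' \<in> ?D2"
    then have c: "h \<in> carrier_vec n" "h' \<in> carrier_vec n" using dual_code_carrier by blast+
    have "G1 *\<^sub>v h = G1 *\<^sub>v h' \<longleftrightarrow> G1 *\<^sub>v h - G1 *\<^sub>v h' = 0\<^sub>v (dim_row G1)"
      using diff_eq_0_vec_iff mult_mat_vec_carrier[OF G1c c(1)] mult_mat_vec_carrier[OF G1c c(2)]
      by blast
    also have "\<dots> \<longleftrightarrow> G1 *\<^sub>v (h - h') = 0\<^sub>v (dim_row G1)"
      by (simp only: mult_minus_distrib_mat_vec[OF G1c c])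
    also have "\<dots> \<longleftrightarrow> h - h' \<in> ?D1" using c by (intro generator_matrix_mult_vec_eq_0_iff[OF G1]) simp
    also have "\<dots> \<longleftrightarrow> h - h' \<in> dual_code n ?S" using kernel linear_code_diff[OF D2 hh] by blast
    finally show "G1 *\<^sub>v h = G1 *\<^sub>v h' \<longleftrightarrow> h - h' \<in> dual_code n ?S" .
  qed
  have "card C2 * card ?D2 = card ?S * card (dual_code n ?S)"
    using card_mult_card_dual_code[OF frob C2] card_mult_card_dual_code[OF frob S] by simp
  then have "card ?S = card C2 * ?P"
    using D2_card card_linear_code_pos[OF linear_code_dual_code[of ?S n]] S
    by (simp add: linear_code_def)
  then have "card C2 * (?P * card (C1 \<inter> C2)) = card C2 * card C1"
    using card_code_sum_mult_card_inter[OF C1 C2] by (simp add: ac_simps)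
  then show ?thesis using card_linear_code_pos[OF C2] by simp
qed

theorem theorem3p10:
  fixes C1 C2 :: "'a::{comm_ring_1, finite} vec set"
    and G1 G2 H1 H2 :: "'a mat"
    and n l :: nat
  assumes "local_frobenius TYPE('a)"
    and "linear_code n C1" and "linear_code n C2"
    and "generator_matrix n C1 G1" and "parity_check_matrix n C1 H1"
    and "generator_matrix n C2 G2" and "parity_check_matrix n C2 H2"
  shows "DLIP (residue_q TYPE('a)) l C1 C2 \<longleftrightarrow>
    (rank_q (residue_q TYPE('a)) (H2 * transpose_mat G1) = rank_q (residue_q TYPE('a)) G1 - real l \<or>
     rank_q (residue_q TYPE('a)) (H1 * transpose_mat G2) = rank_q (residue_q TYPE('a)) G2 - real l)"
proof -
  let ?q = "residue_q TYPE('a)" and ?I = "card (C1 \<inter> C2)"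
  have log_mult_nat: "log ?q (real (a * b)) = log ?q a + log ?q b" if "a * b > 0" for a b :: nat
    using that by (simp add: log_mult_pos)
  have "rank_q ?q G1 = rank_q ?q (H2 * transpose_mat G1) + log ?q ?I"
    using card_row_span_mult_card_inter[OF assms(1-4,7)] log_mult_nat card_linear_code_pos[OF assms(2)]
      assms(4) unfolding rank_q_def generator_matrix_def by metis
  moreover have "rank_q ?q G2 = rank_q ?q (H1 * transpose_mat G2) + log ?q ?I"
    using card_row_span_mult_card_inter[OF assms(1,3,2,6,5)] log_mult_nat card_linear_code_pos[OF assms(3)]
      assms(6) unfolding rank_q_def generator_matrix_def by (metis Int_commute)
  ultimately show ?thesis unfolding DLIP_def code_dim_def by linarith
qed

end
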